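(* For each $t$, the iterate $(x_t,y_t)$ satisfies \[ \sum_{n<t}\bar L_n(x_t,y_t)\ge\min_{x\in\mathcal{X}}\max_{y\in\mathcal{Y}}\sum_{n<t}\bar L_n(x,y), \] and \[ \min_{x\in\mathcal{X}}\max_{y\in\mathcal{Y}}\sum_{n<t}\bar L_n(x,y)-\theta_t^\top x_t^{**}\ge\sum_{n<t}\bar L_n(x_t,y_t)-\theta_t^\top x_t, \] where $x_t^{**}\in\arg\min_{x\in\mathcal{X}}\max_{y\in\mathcal{Y}}\sum_{n<t}\bar L_n(x,y)$.
   Context: Let $\mathcal{X}\subseteq\mathbb{R}^d$ be compact. For $t=1,\dots,T$, $f_t,c_{it}:\mathcal{X}\to\mathbb{R}$ ($i=1,\dots,I$) are $G_0$-Lipschitz w.r.t. $\ell_1$, $b_i\ge0$, and for $y=(\gamma_1,\dots,\gamma_I)$, $L_t(x,y)=f_t(x)+\sum_i\gamma_i[c_{it}(x)-b_i]$. Fix $\lambda>0$, $y_{\max}>0$, $\mathcal{Y}=[0,y_{\max}]^I$, and $\bar L_n(x,y)=L_n(x,y)+\frac{\lambda}{n^{1/9}}\sum_i\log(\gamma_i+1)$. A global minimax point of $h$ on $\mathcal{X}\times\mathcal{Y}$ is $(x^*,y^* )$ with $h(x^*,y)\le h(x^*,y^* )\le\max_{y'\in\mathcal{Y}}h(x,y')$ for all $x,y$. Algorithm (FTDPL with $M=1$): $\eta=T^{-2/3}$; at each period $t$, draw $\theta_t\in\mathbb{R}^d$ with i.i.d. coordinates exponentially distributed with parameter $\eta$,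 and let $(x_t,y_t)$ be a global minimax point of $(x,y)\mapsto\sum_{n<t}\bar L_n(x,y)-\theta_t^\top x$ on $\mathcal{X}\times\mathcal{Y}$. *)

theory Defs
  imports "HOL-Analysis.Analysis"
begin

definition l1_dist :: "real ^ 'd \<Rightarrow> real ^ 'd \<Rightarrow> real" where
  "l1_dist x x' = (\<Sum>j\<in>UNIV. \<bar>x $ j - x' $ j\<bar>)"

definition lipschitz_l1 :: "(real ^ 'd) set \<Rightarrow> real \<Rightarrow> (real ^ 'd \<Rightarrow> real) \<Rightarrow> bool" where
  "lipschitz_l1 X G g \<longleftrightarrow> (\<forall>x\<in>X. \<forall>x'\<in>X. \<bar>g x - g x'\<bar> \<le> G * l1_dist x x')"

definition Ybox :: "real \<Rightarrow> (real ^ 'i) set" where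
  "Ybox ymax = {y. \<forall>i. 0 \<le> y $ i \<and> y $ i \<le> ymax}"

definition Lag :: "(nat \<Rightarrow> real ^ 'd \<Rightarrow> real) \<Rightarrow> (nat \<Rightarrow> 'i::finite \<Rightarrow> real ^ 'd \<Rightarrow> real)
    \<Rightarrow> real ^ 'i \<Rightarrow> nat \<Rightarrow> real ^ 'd \<Rightarrow> real ^ 'i \<Rightarrow> real" where
  "Lag f c b n x y = f n x + (\<Sum>i\<in>UNIV. y $ i * (c n i x - b $ i))"

definition Lbar :: "real \<Rightarrow> (nat \<Rightarrow> real ^ 'd \<Rightarrow> real) \<Rightarrow> (nat \<Rightarrow> 'i::finite \<Rightarrow> real ^ 'd \<Rightarrow> real)
    \<Rightarrow> real ^ 'i \<Rightarrow> nat \<Rightarrow> real ^ 'd \<Rightarrow> real ^ 'i \<Rightarrow> real" where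
  "Lbar lam f c b n x y = Lag f c b n x y
     + lam / (real n powr (1/9)) * (\<Sum>i\<in>UNIV. ln (y $ i + 1))"

text \<open>Cumulative regularized Lagrangian sum_{n<t} bar L_n (periods are 1,2,...).\<close>
definition cumLbar :: "real \<Rightarrow> (nat \<Rightarrow> real ^ 'd \<Rightarrow> real) \<Rightarrow> (nat \<Rightarrow> 'i::finite \<Rightarrow> real ^ 'd \<Rightarrow> real)
    \<Rightarrow> real ^ 'i \<Rightarrow> nat \<Rightarrow> real ^ 'd \<Rightarrow> real ^ 'i \<Rightarrow> real" where
  "cumLbar lam f c b t x y = (\<Sum>n\<in>{1..<t}. Lbar lam f c b n x y)"

definition global_minimax :: "('a \<Rightarrow> 'b \<Rightarrow> real) \<Rightarrow> 'a set \<Rightarrow> 'b set \<Rightarrow> 'a \<Rightarrow> 'b \<Rightarrow> bool" where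
  "global_minimax h X Y xs ys \<longleftrightarrow> xs \<in> X \<and> ys \<in> Y \<and>
     (\<forall>x\<in>X. \<forall>y\<in>Y. h xs y \<le> h xs ys \<and> h xs ys \<le> (SUP y'\<in>Y. h x y'))"

end

theory Submission
  imports Defs
begin

text \<open>Write \<open>S x = SUP y\<in>Y. h x y\<close>. If \<open>(x\<^sub>t, y\<^sub>t)\<close> is a global minimax point of
  \<open>h x y - p x\<close>, then maximality in \<open>y\<close> gives \<open>S x\<^sub>t \<le> h x\<^sub>t y\<^sub>t\<close>, and minimality in \<open>x\<close>
  gives \<open>h x\<^sub>t y\<^sub>t - p x\<^sub>t \<le> S x - p x\<close> for every \<open>x\<close>; taking \<open>x\<close> to be a minimiser of
  \<open>S\<close> yields the second inequality, and the first follows because \<open>S x\<^sub>t\<close> dominates the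
  infimum of \<open>S\<close>. The only analytic input is that these suprema and infima are finite:
  the cumulative regularised Lagrangian is continuous in \<open>y\<close> on the compact box \<open>Y\<close>
  (the logarithms are taken at arguments \<open>\<ge> 1\<close>), and \<open>x \<mapsto> \<theta>\<^sup>T x\<close> is bounded on the
  compact set \<open>X\<close>.\<close>

lemma global_minimax_SUP_le:
  fixes h :: "'a \<Rightarrow> 'b \<Rightarrow> real"
  assumes "global_minimax (\<lambda>x y. h x y - p x) X Y xs ys"
  shows "(SUP y\<in>Y. h xs y) \<le> h xs ys"
proof -
  have "ys \<in> Y" and "\<And>y. y \<in> Y \<Longrightarrow> h xs y \<le> h xs ys"
    using assms by (auto simp: global_minimax_def)
  then show ?thesis
    by (intro cSUP_least) auto
qed

lemma global_minimax_le_SUP_diff: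
  fixes h :: "'a \<Rightarrow> 'b \<Rightarrow> real"
  assumes minimax: "global_minimax (\<lambda>x y. h x y - p x) X Y xs ys"
    and bdd: "bdd_above (h x ` Y)"
    and "x \<in> X"
  shows "h xs ys - p xs \<le> (SUP y\<in>Y. h x y) - p x"
proof -
  have "Y \<noteq> {}"
    using minimax by (auto simp: global_minimax_def)
  have "h xs ys - p xs \<le> (SUP y\<in>Y. h x y - p x)"
    using minimax \<open>x \<in> X\<close> by (auto simp: global_minimax_def)
  also have "\<dots> = (SUP y\<in>Y. - p x + h x y)"
    by simp
  also have "\<dots> = - p x + (SUP y\<in>Y. h x y)"
    by (rule Sup_add_eq[OF bdd \<open>Y \<noteq> {}\<close>])
  finally show ?thesis
    by simp
qed

lemma global_minimax_INF_SUP_le: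
  fixes h :: "'a \<Rightarrow> 'b \<Rightarrow> real"
  assumes minimax: "global_minimax (\<lambda>x y. h x y - p x) X Y xs ys"
    and bdd_h: "\<And>x. x \<in> X \<Longrightarrow> bdd_above (h x ` Y)"
    and bdd_p: "bdd_below (p ` X)"
  shows "(INF x\<in>X. SUP y\<in>Y. h x y) \<le> h xs ys"
proof -
  obtain P where P: "\<And>x. x \<in> X \<Longrightarrow> P \<le> p x"
    using bdd_p by (auto simp: bdd_below_def)
  have "h xs ys - p xs + P \<le> (SUP y\<in>Y. h x y)" if "x \<in> X" for x
    using global_minimax_le_SUP_diff[OF minimax bdd_h[OF that] that] P[OF that] by linarith
  then have "bdd_below ((\<lambda>x. SUP y\<in>Y. h x y) ` X)"
    by (rule bdd_belowI2)
  moreover have "xs \<in> X"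
    using minimax by (simp add: global_minimax_def)
  ultimately have "(INF x\<in>X. SUP y\<in>Y. h x y) \<le> (SUP y\<in>Y. h xs y)"
    by (rule cINF_lower)
  also have "\<dots> \<le> h xs ys"
    using minimax by (rule global_minimax_SUP_le)
  finally show ?thesis .
qed

lemma Ybox_eq_cbox: "Ybox ymax = cbox 0 (\<chi> _. ymax)"
  by (auto simp: Ybox_def mem_box_cart)

lemma continuous_on_cumLbar_Ybox:
  "continuous_on (Ybox ymax) (cumLbar lam f c b t x)"
proof -
  have "y $ i + 1 \<noteq> 0" if "y \<in> Ybox ymax" for y :: "real ^ 'i" and i
  proof -
    have "0 \<le> y $ i"
      using that by (simp add: Ybox_def)
    then show ?thesis
      by linarith
  qed
  then show ?thesis
    unfolding cumLbar_def Lbar_def Lag_def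
    by (intro continuous_intros) auto
qed

lemma bdd_above_cumLbar_Ybox:
  "bdd_above (cumLbar lam f c b t x ` Ybox ymax)"
proof -
  have "compact (cumLbar lam f c b t x ` Ybox ymax)"
    by (intro compact_continuous_image continuous_on_cumLbar_Ybox) (simp add: Ybox_eq_cbox)
  then show ?thesis
    by (intro bounded_imp_bdd_above compact_imp_bounded)
qed

lemma bdd_below_inner_compact:
  fixes X :: "'a::real_inner set"
  assumes "compact X"
  shows "bdd_below ((\<lambda>x. theta \<bullet> x) ` X)"
  using assms by (intro bounded_imp_bdd_below compact_imp_bounded compact_continuous_image
      continuous_intros)

theorem lemma5:
  fixes X :: "(real ^ 'd) set"
    and f :: "nat \<Rightarrow> real ^ 'd \<Rightarrow> real"
    and c :: "nat \<Rightarrow> 'i::finite \<Rightarrow> real ^ 'd \<Rightarrow> real"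
    and b :: "real ^ 'i"
    and G0 lam ymax :: real
    and T t :: nat
    and theta :: "real ^ 'd"
    and xt xss :: "real ^ 'd" and yt :: "real ^ 'i"
  assumes "compact X"
    and "\<And>n. n \<in> {1..T} \<Longrightarrow> lipschitz_l1 X G0 (f n)"
    and "\<And>n i. n \<in> {1..T} \<Longrightarrow> lipschitz_l1 X G0 (c n i)"
    and "\<And>i. b $ i \<ge> 0"
    and "lam > 0" and "ymax > 0"
    and "t \<in> {1..T}"
    and "\<And>j. theta $ j \<ge> 0"
    and "global_minimax (\<lambda>x y. cumLbar lam f c b t x y - theta \<bullet> x) X (Ybox ymax) xt yt"
    and "xss \<in> X"
    and "(SUP y\<in>Ybox ymax. cumLbar lam f c b t xss y)
           = (INF x\<in>X. SUP y\<in>Ybox ymax. cumLbar lam f c b t x y)"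
  shows "cumLbar lam f c b t xt yt \<ge> (INF x\<in>X. SUP y\<in>Ybox ymax. cumLbar lam f c b t x y)
       \<and> (INF x\<in>X. SUP y\<in>Ybox ymax. cumLbar lam f c b t x y) - theta \<bullet> xss
           \<ge> cumLbar lam f c b t xt yt - theta \<bullet> xt"
proof
  show "(INF x\<in>X. SUP y\<in>Ybox ymax. cumLbar lam f c b t x y) \<le> cumLbar lam f c b t xt yt"
    using assms(9) bdd_above_cumLbar_Ybox bdd_below_inner_compact[OF assms(1)]
    by (rule global_minimax_INF_SUP_le)
  show "cumLbar lam f c b t xt yt - theta \<bullet> xt
      \<le> (INF x\<in>X. SUP y\<in>Ybox ymax. cumLbar lam f c b t x y) - theta \<bullet> xss"
    using global_minimax_le_SUP_diff[OF assms(9) bdd_above_cumLbar_Ybox assms(10)] assms(11)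
    by simp
qed

end
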